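(* Let $\mathsf d_Y\le\mathsf d_X$, let $C(\theta_1)$ be a symmetric positive definite $\mathsf d_X\times\mathsf d_X$ matrix depending differentiably on $\theta_1\in\mathbb R^{\mathsf p_1}$, and let $H_x$ be a $\mathsf d_Y\times\mathsf d_X$ matrix with $\mathrm{rank}(H_x)=\mathsf d_Y$; set $V=H_xCH_x^\star$. Then, at any fixed $\theta_1$, $$\mathrm{Tr}\big\{V^{-1}H_x(\partial_1C)H_x^\star V^{-1}H_x(\partial_1C)H_x^\star\big\}\le\mathrm{Tr}\big\{C^{-1}(\partial_1C)C^{-1}\partial_1C\big\}$$ in the partial order of symmetric $\mathsf p_1\times\mathsf p_1$ matrices.
   Context: Here $\star$ denotes transpose and $\partial_1C$ the collection $(\partial_{\theta_{1,k}}C)_{k=1}^{\mathsf p_1}$; for matrices $P,Q$ of matching sizes, $\mathrm{Tr}\{P(\partial_1C)Q\,\partial_1C\}$ denotes the $\mathsf p_1\times\mathsf p_1$ matrix whose $(k,l)$ entry is $\mathrm{Tr}\{P(\partial_{\theta_{1,k}}C)Q\,\partial_{\theta_{1,l}}C\}$ (and analogously for the left-hand side with $H_x(\partial_{\theta_{1,k}}C)H_x^\star$). For symmetric matrices, $M_1\le M_2$ means $M_2-M_1$ is nonnegative definite. In the paper this is applied with $C=C(z,\theta_1^* )$, $H_x=H_x(z,\theta_3^* )$ at each point $z$. *)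

theory Defs
  imports "HOL-Analysis.Analysis"
begin

definition symmetric_mat :: "real^'n^'n \<Rightarrow> bool" where
  "symmetric_mat A \<longleftrightarrow> transpose A = A"

definition pos_def_mat :: "real^'n^'n \<Rightarrow> bool" where
  "pos_def_mat A \<longleftrightarrow> symmetric_mat A \<and> (\<forall>v. v \<noteq> 0 \<longrightarrow> v \<bullet> (A *v v) > 0)"

definition nonneg_def_mat :: "real^'n^'n \<Rightarrow> bool" where
  "nonneg_def_mat A \<longleftrightarrow> symmetric_mat A \<and> (\<forall>v. v \<bullet> (A *v v) \<ge> 0)"

definition loewner_le :: "real^'n^'n \<Rightarrow> real^'n^'n \<Rightarrow> bool" where
  "loewner_le M1 M2 \<longleftrightarrow> symmetric_mat M1 \<and> symmetric_mat M2 \<and> nonneg_def_mat (M2 - M1)"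

text \<open>Partial derivative of a matrix-valued function in direction of the k-th coordinate,
  given its Frechet derivative D.\<close>
definition partial_mat :: "(real^'p \<Rightarrow> real^'x^'x) \<Rightarrow> 'p \<Rightarrow> real^'x^'x" where
  "partial_mat D k = D (axis k 1)"

end

theory Submission
  imports Defs
begin

text \<open>
  Put \<open>Q = H\<^sup>T V\<^sup>-\<^sup>1 H\<close>. Then the left-hand quadratic form in direction \<open>a\<close> is
  \<open>tr (Q S Q S)\<close> with \<open>S = \<partial>\<^sub>a C\<close>, and \<open>Q C Q = Q\<close>. The difference of the two sides is \<open>tr (C\<^sup>-\<^sup>1 R C\<^sup>-\<^sup>1 R) \<ge> 0\<close> for the
  symmetric matrix \<open>R = S - C Q S Q C\<close>; avoiding square roots, this positivity is derived
  from \<open>tr (A B) \<ge> 0\<close> for nonnegative definite \<open>A\<close>, \<open>B\<close>, which in turn follows by writing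
  \<open>B\<close> as a sum of rank-one matrices \<open>b b\<^sup>T\<close> through repeated Schur complements.
\<close>

lemma symmetric_mat_entry: "symmetric_mat A \<Longrightarrow> A$i$j = A$j$i"
  unfolding symmetric_mat_def by (metis transpose_def vec_lambda_beta)

lemma inner_matrix_vector_transpose: "x \<bullet> (A *v y) = (transpose A *v x) \<bullet> (y::real^_)"
  by (simp add: dot_lmul_matrix)

lemma symmetric_mat_inner: "symmetric_mat A \<Longrightarrow> (A *v x) \<bullet> y = x \<bullet> (A *v (y::real^_))"
  by (metis inner_matrix_vector_transpose symmetric_mat_def)

lemma inner_axis_matrix_axis: "axis i 1 \<bullet> ((A::real^'n^'n) *v axis j 1) = A$i$j"
  by (simp add: matrix_vector_mult_basis inner_axis' column_def)

lemma linear_transpose: "linear (transpose :: real^'n^'m \<Rightarrow> real^'m^'n)"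
  by (rule linearI) (simp_all add: transpose_def vec_eq_iff)

lemma symmetric_mat_diff:
  "symmetric_mat A \<Longrightarrow> symmetric_mat B \<Longrightarrow> symmetric_mat (A - B :: real^'n^'n)"
  unfolding symmetric_mat_def by (simp add: linear_diff[OF linear_transpose])

lemma matrix_mul_scaleR_right: "(A::real^'n^'m) ** (c *\<^sub>R B) = c *\<^sub>R (A ** B)"
  by (simp add: matrix_scalar_ac scalar_matrix_assoc)

lemma trace_scaleR: "trace (c *\<^sub>R (A::real^'n^'n)) = c * trace A"
  by (simp add: trace_def sum_distrib_left)

lemma matrix_add_rdistrib: "((A::real^'n^'m) + B) ** C = A ** C + B ** C"
  by (simp add: matrix_matrix_mult_def vec_eq_iff sum.distrib algebra_simps)

lemma matrix_diff_rdistrib: "((A::real^'n^'m) - B) ** C = A ** C - B ** C"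
  by (simp add: matrix_matrix_mult_def vec_eq_iff sum_subtractf algebra_simps)

lemma matrix_diff_ldistrib: "(A::real^'n^'m) ** (B - C) = A ** B - A ** C"
  by (simp add: matrix_matrix_mult_def vec_eq_iff sum_subtractf algebra_simps)

definition outer_prod :: "real^'n \<Rightarrow> real^'n^'n" where
  "outer_prod b = (\<chi> i j. b$i * b$j)"

lemma outer_prod_mult_vec: "outer_prod b *v v = (b \<bullet> v) *\<^sub>R b"
  by (simp add: outer_prod_def vec_eq_iff matrix_vector_mult_def inner_vec_def sum_distrib_left mult_ac)

lemma trace_mult_outer_prod: "trace (A ** outer_prod b) = b \<bullet> (A *v b)"
  by (simp add: outer_prod_def trace_def matrix_matrix_mult_def matrix_vector_mult_def inner_vec_def
      sum_distrib_left mult_ac)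

lemma nonneg_def_mat_diag_nonneg: "nonneg_def_mat (B::real^'n^'n) \<Longrightarrow> B$k$k \<ge> 0"
  unfolding nonneg_def_mat_def by (metis inner_axis_matrix_axis)

lemma nonneg_def_mat_diag_zero:
  assumes B: "nonneg_def_mat (B::real^'n^'n)" and diag: "B$k$k = 0"
  shows "B$k$j = 0"
proof (rule ccontr)
  assume ne: "B$k$j \<noteq> 0"
  have sym: "B$j$k = B$k$j" using B symmetric_mat_entry nonneg_def_mat_def by metis
  define t where "t = - (B$j$j + 1) / (2 * B$k$j)"
  define v :: "real^'n" where "v = t *\<^sub>R axis k 1 + axis j 1"
  have "0 \<le> v \<bullet> (B *v v)"
    using B nonneg_def_mat_def by blast
  also have "\<dots> = t * t * B$k$k + t * B$k$j + t * B$j$k + B$j$j"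
    by (simp add: v_def matrix_vector_right_distrib matrix_vector_mult_scaleR inner_add_left
        inner_add_right inner_axis_matrix_axis algebra_simps)
  also have "\<dots> = -1"
    using ne by (simp add: diag sym t_def field_simps)
  finally show False by simp
qed

text \<open>One step of symmetric Gaussian elimination: subtracting the rank-one part
  \<open>b b\<^sup>T / B\<^sub>k\<^sub>k\<close> with \<open>b\<close> the \<open>k\<close>-th row clears row and column \<open>k\<close>.\<close>

lemma schur_complement_entry:
  "(B - (1 / B$k$k) *\<^sub>R outer_prod (row k B))$i$j = B$i$j - B$k$i * B$k$j / B$k$k"
  by (simp add: outer_prod_def row_def)

lemma nonneg_def_mat_schur_complement:
  assumes B: "nonneg_def_mat (B::real^'n^'n)" and pos: "B$k$k > 0"
  shows "nonneg_def_mat (B - (1 / B$k$k) *\<^sub>R outer_prod (row k B))"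
    (is "nonneg_def_mat ?B'")
proof -
  have symB: "symmetric_mat B" using B nonneg_def_mat_def by blast
  have "?B'$i$j = ?B'$j$i" for i j
    unfolding schur_complement_entry using symmetric_mat_entry[OF symB, of i j] by (simp add: mult.commute)
  then have sym: "symmetric_mat ?B'"
    unfolding symmetric_mat_def by (simp add: vec_eq_iff transpose_def)
  have "v \<bullet> (?B' *v v) \<ge> 0" for v
  proof -
    define r where "r = row k B \<bullet> v"
    define c where "c = r / B$k$k"
    have r_left: "axis k 1 \<bullet> (B *v v) = r"
      unfolding inner_axis' by (simp add: r_def matrix_vector_mult_def row_def inner_vec_def)
    have r_right: "v \<bullet> (B *v axis k 1) = r"
      using symmetric_mat_inner[OF symB, of v "axis k 1"] r_left by (simp add: inner_commute)
    have "0 \<le> (v - c *\<^sub>R axis k 1) \<bullet> (B *v (v - c *\<^sub>R axis k 1))"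
      using B nonneg_def_mat_def by blast
    also have "\<dots> = v \<bullet> (B *v v) - c * (axis k 1 \<bullet> (B *v v)) - c * (v \<bullet> (B *v axis k 1)) + c * c * B$k$k"
      by (simp add: matrix_vector_mult_diff_distrib matrix_vector_mult_scaleR inner_diff_left
          inner_diff_right inner_axis_matrix_axis algebra_simps)
    also have "\<dots> = v \<bullet> (B *v v) - r * r / B$k$k"
      unfolding r_left r_right c_def using pos by (simp add: field_simps)
    also have "\<dots> = v \<bullet> (?B' *v v)"
      by (simp add: r_def matrix_vector_mult_diff_rdistrib scaleR_matrix_vector_assoc[symmetric]
          outer_prod_mult_vec inner_diff_right inner_commute)
    finally show ?thesis .
  qed
  with sym show ?thesis unfolding nonneg_def_mat_def by blast
qed

lemma trace_mult_nonneg_def_supported: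
  fixes A B :: "real^'n^'n"
  assumes A: "nonneg_def_mat A" and "finite I"
    and "nonneg_def_mat B" and "\<And>i j. B$i$j \<noteq> 0 \<Longrightarrow> i \<in> I \<and> j \<in> I"
  shows "trace (A ** B) \<ge> 0"
  using assms(2-)
proof (induction I arbitrary: B rule: finite_induct)
  case empty
  then have "B = 0" by (auto simp: vec_eq_iff)
  then show ?case by (simp add: trace_def)
next
  case (insert k I)
  have symB: "symmetric_mat B" using insert.prems(1) nonneg_def_mat_def by blast
  consider "B$k$k = 0" | "B$k$k > 0"
    using nonneg_def_mat_diag_nonneg[OF insert.prems(1), of k] by linarith
  then show ?case
  proof cases
    case 1
    then have "B$k$j = 0" "B$j$k = 0" for j
      using nonneg_def_mat_diag_zero[OF insert.prems(1)] symmetric_mat_entry[OF symB] by metis+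
    then have "B$i$j \<noteq> 0 \<Longrightarrow> i \<in> I \<and> j \<in> I" for i j
      using insert.prems(2) by blast
    then show ?thesis using insert.IH insert.prems(1) by blast
  next
    case 2
    define b where "b = row k B"
    define B' where "B' = B - (1 / B$k$k) *\<^sub>R outer_prod b"
    have supp: "B'$i$j \<noteq> 0 \<Longrightarrow> i \<in> I \<and> j \<in> I" for i j
    proof -
      have "B'$i$j = B$i$j - B$k$i * B$k$j / B$k$k"
        unfolding B'_def b_def by (rule schur_complement_entry)
      moreover have "B$i$k = B$k$i" by (rule symmetric_mat_entry[OF symB])
      ultimately show "B'$i$j \<noteq> 0 \<Longrightarrow> i \<in> I \<and> j \<in> I"
        using 2 insert.prems(2)[of i j] insert.prems(2)[of k i] insert.prems(2)[of k j]
        by (cases "i = k \<or> j = k"; cases "B$i$j = 0") auto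
    qed
    have "nonneg_def_mat B'"
      unfolding B'_def b_def using insert.prems(1) 2 by (rule nonneg_def_mat_schur_complement)
    then have "trace (A ** B') \<ge> 0" using supp by (rule insert.IH)
    moreover have "trace (A ** outer_prod b) \<ge> 0"
      using A unfolding trace_mult_outer_prod nonneg_def_mat_def by blast
    moreover have "trace (A ** B) = trace (A ** B') + (1 / B$k$k) * trace (A ** outer_prod b)"
      by (simp add: B'_def matrix_diff_ldistrib trace_sub matrix_mul_scaleR_right trace_scaleR)
    ultimately show ?thesis using 2 by simp
  qed
qed

lemma trace_mult_nonneg_def:
  fixes A B :: "real^'n^'n"
  assumes "nonneg_def_mat A" "nonneg_def_mat B"
  shows "trace (A ** B) \<ge> 0"
  using trace_mult_nonneg_def_supported[OF assms(1) _ assms(2), of UNIV] by simp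

lemma matrix_inv_right: "invertible (A::real^'n^'n) \<Longrightarrow> A ** matrix_inv A = mat 1"
  and matrix_inv_left: "invertible (A::real^'n^'n) \<Longrightarrow> matrix_inv A ** A = mat 1"
  unfolding invertible_def matrix_inv_def by (metis (mono_tags, lifting) someI_ex)+

lemma pos_def_mat_invertible:
  assumes "pos_def_mat (A::real^'n^'n)"
  shows "invertible A"
proof -
  have "A *v x = 0 \<Longrightarrow> x = 0" for x
    using assms unfolding pos_def_mat_def by force
  then show ?thesis using matrix_left_invertible_ker invertible_left_inverse by blast
qed

lemma symmetric_mat_matrix_inv:
  assumes inv: "invertible (A::real^'n^'n)" and sym: "symmetric_mat A"
  shows "symmetric_mat (matrix_inv A)"
proof -
  let ?B = "matrix_inv A"
  have left: "transpose ?B ** A = mat 1"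
    using matrix_inv_right[OF inv] sym by (metis matrix_transpose_mul symmetric_mat_def transpose_mat)
  have "transpose ?B = transpose ?B ** A ** ?B"
    using matrix_inv_right[OF inv] by (metis matrix_mul_assoc matrix_mul_rid)
  also have "\<dots> = ?B" using left by simp
  finally show ?thesis unfolding symmetric_mat_def .
qed

lemma nonneg_def_mat_matrix_inv:
  assumes pos: "pos_def_mat (A::real^'n^'n)"
  shows "nonneg_def_mat (matrix_inv A)"
proof -
  have inv: "invertible A" using pos by (rule pos_def_mat_invertible)
  have sym: "symmetric_mat A" using pos pos_def_mat_def by blast
  have "v \<bullet> (matrix_inv A *v v) \<ge> 0" for v
  proof -
    define w where "w = matrix_inv A *v v"
    have "A *v w = v" by (simp add: w_def matrix_vector_mul_assoc matrix_inv_right[OF inv])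
    then have "v \<bullet> (matrix_inv A *v v) = (A *v w) \<bullet> w" by (simp add: w_def)
    also have "\<dots> = w \<bullet> (A *v w)" by (rule symmetric_mat_inner[OF sym])
    also have "\<dots> \<ge> 0"
      using pos unfolding pos_def_mat_def by (cases "w = 0") (auto intro: less_imp_le)
    finally show ?thesis .
  qed
  then show ?thesis unfolding nonneg_def_mat_def using symmetric_mat_matrix_inv[OF inv sym] by blast
qed

lemma nonneg_def_mat_congruence:
  assumes A: "nonneg_def_mat (A::real^'n^'n)" and R: "symmetric_mat R"
  shows "nonneg_def_mat (R ** A ** R)"
proof -
  have "v \<bullet> ((R ** A ** R) *v v) = (R *v v) \<bullet> (A *v (R *v v))" for v
    by (metis matrix_vector_mul_assoc symmetric_mat_inner[OF R])
  moreover have "symmetric_mat (R ** A ** R)"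
    using assms unfolding symmetric_mat_def nonneg_def_mat_def
    by (simp add: matrix_transpose_mul matrix_mul_assoc)
  ultimately show ?thesis using A unfolding nonneg_def_mat_def by simp
qed

lemma pos_def_mat_congruence_full_rank:
  fixes C :: "real^'x^'x" and H :: "real^'x^'y"
  assumes pos: "pos_def_mat C" and rank: "rank H = CARD('y)"
  shows "pos_def_mat (H ** C ** transpose H)"
proof -
  have inj: "inj ((*v) (transpose H))"
    using rank rank_transpose full_rank_injective by metis
  have "v \<bullet> ((H ** C ** transpose H) *v v) > 0" if "v \<noteq> 0" for v
  proof -
    define w where "w = transpose H *v v"
    have "w \<noteq> 0" using inj that unfolding w_def by (metis injD matrix_vector_mult_0_right)
    then have "w \<bullet> (C *v w) > 0" using pos pos_def_mat_def by blast
    moreover have "v \<bullet> ((H ** C ** transpose H) *v v) = w \<bullet> (C *v w)"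
      unfolding w_def by (metis inner_matrix_vector_transpose matrix_vector_mul_assoc)
    ultimately show ?thesis by simp
  qed
  moreover have "symmetric_mat (H ** C ** transpose H)"
    using pos unfolding pos_def_mat_def symmetric_mat_def
    by (simp add: matrix_transpose_mul matrix_mul_assoc)
  ultimately show ?thesis unfolding pos_def_mat_def by blast
qed

lemma has_derivative_symmetric_mat:
  assumes sym: "\<And>t. symmetric_mat (C t)" and deriv: "(C has_derivative D) (at \<theta>)"
  shows "symmetric_mat (D u)"
proof -
  have "bounded_linear (transpose :: real^'n^'n \<Rightarrow> real^'n^'n)"
    using linear_transpose linear_conv_bounded_linear by blast
  from bounded_linear.has_derivative[OF this deriv]
  have "(C has_derivative (\<lambda>u. transpose (D u))) (at \<theta>)"
    using sym unfolding symmetric_mat_def by simp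
  then have "(\<lambda>u. transpose (D u)) = D" using has_derivative_unique deriv by blast
  then show ?thesis unfolding symmetric_mat_def by metis
qed

text \<open>With the orthogonal projection \<open>P = C\<^sup>1\<^sup>/\<^sup>2 Q C\<^sup>1\<^sup>/\<^sup>2\<close> and \<open>X = C\<^sup>-\<^sup>1\<^sup>/\<^sup>2 S C\<^sup>-\<^sup>1\<^sup>/\<^sup>2\<close> this reads
  \<open>tr (P X P X) \<le> tr (X X)\<close>.\<close>

lemma trace_projection_le:
  fixes C Q S :: "real^'n^'n"
  assumes pos: "pos_def_mat C" and symQ: "symmetric_mat Q" and proj: "Q ** C ** Q = Q"
    and symS: "symmetric_mat S"
  shows "trace (Q ** S ** Q ** S) \<le> trace (matrix_inv C ** S ** matrix_inv C ** S)"
proof -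
  define Ci where "Ci = matrix_inv C"
  define W where "W = trace (Q ** S ** Q ** S)"
  define R where "R = S - C ** Q ** S ** Q ** C"
  define Y where "Y = Q ** S ** Q ** C"
  have inv: "invertible C" using pos by (rule pos_def_mat_invertible)
  have CiC: "Ci ** C = mat 1" and CCi: "C ** Ci = mat 1"
    unfolding Ci_def using matrix_inv_left[OF inv] matrix_inv_right[OF inv] .
  have symR: "symmetric_mat R"
    unfolding R_def using symS pos symQ
    by (intro symmetric_mat_diff) (simp_all add: pos_def_mat_def symmetric_mat_def
        matrix_transpose_mul matrix_mul_assoc)
  have CiR: "Ci ** R = Ci ** S - Y"
    unfolding R_def Y_def by (simp add: matrix_diff_ldistrib matrix_mul_assoc CiC)
  have "0 \<le> trace (Ci ** (R ** Ci ** R))"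
    using pos symR unfolding Ci_def
    by (intro trace_mult_nonneg_def nonneg_def_mat_congruence nonneg_def_mat_matrix_inv)
  also have "\<dots> = trace ((Ci ** R) ** (Ci ** R))"
    by (simp add: matrix_mul_assoc)
  also have "\<dots> = trace (Ci ** S ** Ci ** S) - trace (Ci ** S ** Y) - trace (Y ** Ci ** S)
      + trace (Y ** Y)"
    unfolding CiR by (simp add: matrix_diff_ldistrib matrix_diff_rdistrib trace_sub matrix_mul_assoc)
  also have "trace (Ci ** S ** Y) = W"
  proof -
    have "trace (Ci ** S ** Y) = trace ((Ci ** S ** Q ** S ** Q) ** C)"
      by (simp add: Y_def matrix_mul_assoc)
    also have "\<dots> = trace (C ** (Ci ** S ** Q ** S ** Q))"
      by (rule trace_mul_sym)
    also have "\<dots> = trace (S ** (Q ** S ** Q))"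
      by (simp add: matrix_mul_assoc CCi)
    also have "\<dots> = W"
      unfolding W_def by (subst trace_mul_sym) (simp add: matrix_mul_assoc)
    finally show ?thesis .
  qed
  also have "trace (Y ** Ci ** S) = W"
  proof -
    have "Y ** Ci ** S = Q ** S ** Q ** (C ** Ci) ** S"
      by (simp add: Y_def matrix_mul_assoc)
    then show ?thesis by (simp add: CCi W_def)
  qed
  also have "trace (Y ** Y) = W"
  proof -
    have "Y ** Y = (Q ** S ** (Q ** C ** Q) ** S ** Q) ** C"
      by (simp add: Y_def matrix_mul_assoc)
    then have "trace (Y ** Y) = trace (C ** (Q ** S ** Q ** S ** Q))"
      unfolding proj by (simp add: trace_mul_sym[of _ C])
    also have "\<dots> = trace ((C ** Q ** S ** Q ** S) ** Q)"
      by (simp add: matrix_mul_assoc)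
    also have "\<dots> = trace (Q ** (C ** Q ** S ** Q ** S))"
      by (rule trace_mul_sym)
    also have "\<dots> = trace ((Q ** C ** Q) ** S ** Q ** S)"
      by (simp add: matrix_mul_assoc)
    finally show ?thesis unfolding W_def proj .
  qed
  finally show ?thesis unfolding W_def Ci_def by simp
qed

lemma trace_congruence_inverse_le:
  fixes C S :: "real^'x^'x" and H :: "real^'x^'y"
  assumes pos: "pos_def_mat C" and rank: "rank H = CARD('y)" and symS: "symmetric_mat S"
  defines "V \<equiv> H ** C ** transpose H"
  shows "trace (matrix_inv V ** (H ** S ** transpose H) ** matrix_inv V ** (H ** S ** transpose H))
    \<le> trace (matrix_inv C ** S ** matrix_inv C ** S)"
proof -
  define Q where "Q = transpose H ** matrix_inv V ** H"
  have posV: "pos_def_mat V"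
    unfolding V_def using pos rank by (rule pos_def_mat_congruence_full_rank)
  then have inv: "invertible V" by (rule pos_def_mat_invertible)
  have "symmetric_mat (matrix_inv V)"
    using posV inv symmetric_mat_matrix_inv pos_def_mat_def by blast
  then have symQ: "symmetric_mat Q"
    unfolding Q_def symmetric_mat_def by (simp add: matrix_transpose_mul matrix_mul_assoc)
  have "Q ** C ** Q = transpose H ** (matrix_inv V ** V) ** matrix_inv V ** H"
    by (simp add: Q_def V_def matrix_mul_assoc)
  then have proj: "Q ** C ** Q = Q"
    unfolding Q_def by (simp add: matrix_inv_left[OF inv])
  have "trace (matrix_inv V ** (H ** S ** transpose H) ** matrix_inv V ** (H ** S ** transpose H))
      = trace ((matrix_inv V ** H ** S ** transpose H ** matrix_inv V ** H ** S) ** transpose H)"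
    by (simp add: matrix_mul_assoc)
  also have "\<dots> = trace (Q ** S ** Q ** S)"
    unfolding Q_def by (subst trace_mul_sym) (simp add: matrix_mul_assoc)
  finally have "trace (matrix_inv V ** (H ** S ** transpose H) ** matrix_inv V ** (H ** S ** transpose H))
      = trace (Q ** S ** Q ** S)" .
  with trace_projection_le[OF pos symQ proj symS] show ?thesis by simp
qed

lemma linear_trace_mult_left: "linear D \<Longrightarrow> linear (\<lambda>u. trace ((P::real^'n^'n) ** D u))"
  by (rule linearI) (simp_all add: linear_add linear_scale matrix_add_ldistrib trace_add
      matrix_mul_scaleR_right trace_scaleR)

lemma linear_congruence: "linear D \<Longrightarrow> linear (\<lambda>u. (H::real^'x^'y) ** D u ** transpose H)"
  by (rule linearI) (simp_all add: linear_add linear_scale matrix_add_ldistrib matrix_add_rdistrib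
      matrix_mul_scaleR_right scalar_matrix_assoc[symmetric])

definition trace_form_mat :: "real^'n^'n \<Rightarrow> (real^'p \<Rightarrow> real^'n^'n) \<Rightarrow> real^'p^'p" where
  "trace_form_mat X D = (\<chi> k l. trace (X ** D (axis k 1) ** X ** D (axis l 1)))"

lemma symmetric_trace_form_mat: "symmetric_mat (trace_form_mat X D)"
proof -
  have "trace (X ** A ** X ** B) = trace (X ** B ** X ** A)" for A B
  proof -
    have "trace (X ** A ** X ** B) = trace ((X ** A) ** (X ** B))" by (simp add: matrix_mul_assoc)
    also have "\<dots> = trace ((X ** B) ** (X ** A))" by (rule trace_mul_sym)
    finally show ?thesis by (simp add: matrix_mul_assoc)
  qed
  then show ?thesis
    unfolding symmetric_mat_def trace_form_mat_def by (simp add: vec_eq_iff transpose_def)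
qed

lemma trace_form_mat_quadratic:
  fixes D :: "real^'p \<Rightarrow> real^'n^'n"
  assumes lin: "linear D"
  shows "a \<bullet> (trace_form_mat X D *v a) = trace (X ** D a ** X ** D a)"
proof -
  define g where "g u w = trace (X ** D u ** X ** D w)" for u w
  have lin_right: "linear (g u)" for u
    unfolding g_def using linear_trace_mult_left[OF lin] .
  have "g u w = trace ((X ** D w ** X) ** D u)" for u w
    unfolding g_def by (metis matrix_mul_assoc trace_mul_sym)
  then have lin_left: "linear (\<lambda>u. g u w)" for w
    using linear_trace_mult_left[OF lin] by presburger
  have a: "a = (\<Sum>k\<in>UNIV. a$k *\<^sub>R axis k 1)"
    using basis_expansion[of a] by (simp add: scalar_mult_eq_scaleR)
  have "g a w = (\<Sum>k\<in>UNIV. a$k * g (axis k 1) w)" for w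
    by (subst a) (simp add: linear_sum[OF lin_left] linear_scale[OF lin_left] o_def)
  then have "g a a = (\<Sum>l\<in>UNIV. a$l * (\<Sum>k\<in>UNIV. a$k * g (axis k 1) (axis l 1)))"
    by (subst (2) a) (simp add: linear_sum[OF lin_right] linear_scale[OF lin_right] o_def)
  also have "\<dots> = (\<Sum>k\<in>UNIV. a$k * (\<Sum>l\<in>UNIV. g (axis k 1) (axis l 1) * a$l))"
    by (simp add: sum_distrib_left mult_ac) (subst sum.swap, simp add: mult_ac)
  finally show ?thesis
    unfolding g_def trace_form_mat_def by (simp add: inner_vec_def matrix_vector_mult_def)
qed

lemma loewner_le_iff_quadratic:
  assumes "symmetric_mat M1" "symmetric_mat M2"
  shows "loewner_le M1 M2 \<longleftrightarrow> (\<forall>a. a \<bullet> (M1 *v a) \<le> a \<bullet> (M2 *v a))"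
  using assms symmetric_mat_diff[OF assms(2,1)]
  by (simp add: loewner_le_def nonneg_def_mat_def matrix_vector_mult_diff_rdistrib inner_diff_right)

theorem proposition13p1:
  fixes C :: "real^'p \<Rightarrow> real^'x^'x"
    and H :: "real^'x^'y"
    and \<theta> :: "real^'p"
    and D :: "real^'p \<Rightarrow> real^'x^'x"
  assumes dim: "CARD('y) \<le> CARD('x)"
    and posdef: "\<And>t. pos_def_mat (C t)"
    and diff: "\<And>t. C differentiable (at t)"
    and deriv: "(C has_derivative D) (at \<theta>)"
    and rk: "rank H = CARD('y)"
  shows "let V = H ** C \<theta> ** transpose H;
             lhs = (\<chi> k l. trace (matrix_inv V ** (H ** partial_mat D k ** transpose H)
                                  ** matrix_inv V ** (H ** partial_mat D l ** transpose H)));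
             rhs = (\<chi> k l. trace (matrix_inv (C \<theta>) ** partial_mat D k
                                  ** matrix_inv (C \<theta>) ** partial_mat D l))
         in loewner_le lhs rhs"
proof -
  \<comment> \<open>\<open>dim\<close> follows from \<open>rk\<close>, and only differentiability at \<open>\<theta>\<close> is needed, so \<open>diff\<close> is unused.\<close>
  let ?V = "H ** C \<theta> ** transpose H"
  let ?DH = "\<lambda>u. H ** D u ** transpose H"
  have lin: "linear D" using deriv by (rule has_derivative_linear)
  have symD: "symmetric_mat (D u)" for u
    using posdef deriv unfolding pos_def_mat_def by (blast intro: has_derivative_symmetric_mat)
  have "a \<bullet> (trace_form_mat (matrix_inv ?V) ?DH *v a) \<le> a \<bullet> (trace_form_mat (matrix_inv (C \<theta>)) D *v a)"
    for a
    unfolding trace_form_mat_quadratic[OF lin] trace_form_mat_quadratic[OF linear_congruence[OF lin]]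
    using trace_congruence_inverse_le[OF posdef rk symD] .
  then have "loewner_le (trace_form_mat (matrix_inv ?V) ?DH) (trace_form_mat (matrix_inv (C \<theta>)) D)"
    by (simp add: loewner_le_iff_quadratic symmetric_trace_form_mat)
  then show ?thesis
    unfolding Let_def partial_mat_def trace_form_mat_def .
qed

end
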